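(* Let $J\subset K[x,y]_y$ be a binomial ideal and let $\xi\in\mathrm{Spec}(K[x,y]_y)$ be a point where $\mathrm{Eord}_\xi(J)=\theta>0$ is maximal (over $W$). Let $f=y^\gamma x^\alpha-bx^\beta\in J$ be a binomial without common factors, with $\alpha,\beta\in\mathbb N^s$, $\gamma\in\mathbb Z^{n-s}$, $b\in K$, $0<|\alpha|\le|\beta|$, such that $\mathrm{Eord}_\xi(f)=\theta=|\alpha|$, $\xi_i=0$ for all $i$ with $\alpha_i>0$, and $y^\gamma(\xi)\neq0$. Then, in a neighbourhood of $\xi$, $\mathrm{ESing}(J,\theta)\subseteq\{x_i=0\}$ for some $i$ with $\alpha_i>0$.
   Context: $K$ is an algebraically closed field of arbitrary characteristic; $W=\mathrm{Spec}(K[x_1,\dots,x_s,y_1,\dots,y_{n-s}]_y)$ (localization at $y_1\cdots y_{n-s}$). $E\cap W=\{V(x_1),\dots,V(x_s)\}$. For $\xi\in W$ let $\Lambda(\xi)=\{i:\xi\in V(x_i)\}$ and $E^0_{\Lambda(\xi)}$ the stratum of points lying on $V(x_i)$ exactly for $i\in\Lambda(\xi)$; its ideal is generated by the $x_i$, $i\in\Lambda(\xi)$. $\mathrm{Eord}_\xi(J)=\max\{m\in\mathbb N: J_\xi\subset(I(E^0_{\Lambda(\xi)})_\xi)^m\}$, $\mathrm{Eord}_\xi(f)=\mathrm{Eord}_\xi(\langle f\rangle)$, and $\mathrm{ESing}(J,\theta)=\{\xi:\mathrm{Eord}_\xi(J)\ge\theta\}$. A binomial ideal is an ideal generated by elements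 $x^{\lambda}(1-\mu y^{\delta})$ or $x^{\nu}(y^{\gamma}x^{\alpha}-bx^{\beta})$ with $\lambda,\nu,\alpha,\beta\in\mathbb N^s$, $\gamma,\delta\in\mathbb Z^{n-s}$, $\mu,b\in K$, each $y^\gamma x^\alpha-bx^\beta$ without common factors and $0<|\alpha|\le|\beta|$. *)

theory Defs
  imports Main "HOL-Library.Poly_Mapping" "HOL-Library.Extended_Nat"
    "HOL-Computational_Algebra.Polynomial"
begin

text \<open>Laurent polynomials in variables indexed by nat.  Variable i < s is x_(i+1),
  variable s + j (j < n - s) is y_(j+1).  An element of K[x,y]_y is a finitely supported
  map from exponent vectors (nat =>0 int) to K whose exponents are nonnegative on the
  x-variables and vanish on indices >= n.\<close>

type_synonym 'k lpoly = "(nat \<Rightarrow>\<^sub>0 int) \<Rightarrow>\<^sub>0 'k"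

definition alg_closed :: "'k::field itself \<Rightarrow> bool" where
  "alg_closed _ \<longleftrightarrow> (\<forall>p :: 'k poly. degree p > 0 \<longrightarrow> (\<exists>z. poly p z = 0))"

definition Rng :: "nat \<Rightarrow> nat \<Rightarrow> 'k::field lpoly set" where
  "Rng s n = {p. \<forall>e \<in> Poly_Mapping.keys p. (\<forall>i<s. Poly_Mapping.lookup e i \<ge> 0) \<and> (\<forall>i\<ge>n. Poly_Mapping.lookup e i = 0)}"

text \<open>Closed points of W = Spec K[x,y]_y: x-coordinates arbitrary, y-coordinates nonzero;
  coordinates at indices >= n normalised to 0.\<close>
definition Pts :: "nat \<Rightarrow> nat \<Rightarrow> (nat \<Rightarrow> 'k::field) set" where
  "Pts s n = {a. (\<forall>i. s \<le> i \<and> i < n \<longrightarrow> a i \<noteq> 0) \<and> (\<forall>i\<ge>n. a i = 0)}"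

definition eval :: "'k::field lpoly \<Rightarrow> (nat \<Rightarrow> 'k) \<Rightarrow> 'k" where
  "eval p a = (\<Sum>e\<in>Poly_Mapping.keys p. Poly_Mapping.lookup p e * (\<Prod>i\<in>Poly_Mapping.keys e. a i powi Poly_Mapping.lookup e i))"

definition ideal_gen :: "nat \<Rightarrow> nat \<Rightarrow> 'k::field lpoly set \<Rightarrow> 'k lpoly set" where
  "ideal_gen s n S = {\<Sum>g\<in>F. c g * g | F c. finite F \<and> F \<subseteq> S \<and> (\<forall>g\<in>F. c g \<in> Rng s n)}"

definition ideal_pow :: "nat \<Rightarrow> nat \<Rightarrow> 'k::field lpoly set \<Rightarrow> nat \<Rightarrow> 'k lpoly set" where
  "ideal_pow s n I m = ideal_gen s n {prod_list l | l. length l = m \<and> set l \<subseteq> I}"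

definition var :: "nat \<Rightarrow> 'k::field lpoly" where
  "var i = Poly_Mapping.single (Poly_Mapping.single i 1) 1"

definition expo :: "nat \<Rightarrow> nat \<Rightarrow> (nat \<Rightarrow> nat) \<Rightarrow> (nat \<Rightarrow> int) \<Rightarrow> (nat \<Rightarrow>\<^sub>0 int)" where
  "expo s n \<alpha> \<gamma> = Abs_poly_mapping
     (\<lambda>i. if i < s then int (\<alpha> i) else if i < n then \<gamma> (i - s) else 0)"

definition mon :: "nat \<Rightarrow> nat \<Rightarrow> (nat \<Rightarrow> nat) \<Rightarrow> (nat \<Rightarrow> int) \<Rightarrow> 'k \<Rightarrow> 'k::field lpoly" where
  "mon s n \<alpha> \<gamma> c = Poly_Mapping.single (expo s n \<alpha> \<gamma>) c"

definition absn :: "nat \<Rightarrow> (nat \<Rightarrow> nat) \<Rightarrow> nat" where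
  "absn s \<alpha> = (\<Sum>i<s. \<alpha> i)"

definition coprime_exps :: "nat \<Rightarrow> (nat \<Rightarrow> nat) \<Rightarrow> (nat \<Rightarrow> nat) \<Rightarrow> bool" where
  "coprime_exps s \<alpha> \<beta> \<longleftrightarrow> (\<forall>i<s. \<alpha> i = 0 \<or> \<beta> i = 0)"

definition zeroy :: "nat \<Rightarrow> int" where "zeroy = (\<lambda>_. 0)"
definition zerox :: "nat \<Rightarrow> nat" where "zerox = (\<lambda>_. 0)"

definition binom :: "nat \<Rightarrow> nat \<Rightarrow> (nat \<Rightarrow> nat) \<Rightarrow> (nat \<Rightarrow> nat) \<Rightarrow> (nat \<Rightarrow> int) \<Rightarrow> 'k \<Rightarrow> 'k::field lpoly" where
  "binom s n \<alpha> \<beta> \<gamma> b = mon s n \<alpha> \<gamma> 1 - mon s n \<beta> zeroy b"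

definition binom_gens :: "nat \<Rightarrow> nat \<Rightarrow> 'k::field lpoly set" where
  "binom_gens s n =
     {mon s n lam zeroy 1 * (1 - mon s n zerox \<delta> \<mu>) | lam \<delta> \<mu>. True} \<union>
     {mon s n \<nu> zeroy 1 * binom s n \<alpha> \<beta> \<gamma> b | \<nu> \<alpha> \<beta> \<gamma> b.
        coprime_exps s \<alpha> \<beta> \<and> 0 < absn s \<alpha> \<and> absn s \<alpha> \<le> absn s \<beta>}"

definition binomial_ideal :: "nat \<Rightarrow> nat \<Rightarrow> 'k::field lpoly set \<Rightarrow> bool" where
  "binomial_ideal s n J \<longleftrightarrow> (\<exists>G \<subseteq> binom_gens s n. J = ideal_gen s n G)"

definition Lam :: "nat \<Rightarrow> (nat \<Rightarrow> 'k::field) \<Rightarrow> nat set" where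
  "Lam s a = {i. i < s \<and> a i = 0}"

definition stratum_ideal :: "nat \<Rightarrow> nat \<Rightarrow> (nat \<Rightarrow> 'k::field) \<Rightarrow> 'k lpoly set" where
  "stratum_ideal s n a = ideal_gen s n (var ` Lam s a)"

text \<open>J_a \<subseteq> (I_a)^m in the local ring at the point a: every f in J becomes,
  after multiplying by some h with h(a) \<noteq> 0, an element of I^m.\<close>
definition loc_sub :: "nat \<Rightarrow> nat \<Rightarrow> 'k::field lpoly set \<Rightarrow> (nat \<Rightarrow> 'k) \<Rightarrow> nat \<Rightarrow> bool" where
  "loc_sub s n J a m \<longleftrightarrow>
     (\<forall>f\<in>J. \<exists>h\<in>Rng s n. eval h a \<noteq> 0 \<and> h * f \<in> ideal_pow s n (stratum_ideal s n a) m)"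

definition Eord :: "nat \<Rightarrow> nat \<Rightarrow> 'k::field lpoly set \<Rightarrow> (nat \<Rightarrow> 'k) \<Rightarrow> enat" where
  "Eord s n J a = Sup {enat m | m. loc_sub s n J a m}"

definition ESing :: "nat \<Rightarrow> nat \<Rightarrow> 'k::field lpoly set \<Rightarrow> enat \<Rightarrow> (nat \<Rightarrow> 'k) set" where
  "ESing s n J \<theta> = {a \<in> Pts s n. Eord s n J a \<ge> \<theta>}"

end

theory Submission
  imports Defs
begin

text \<open>Every point \<eta> of \<open>ESing(J, \<theta>)\<close> lies on \<open>x\<^sub>i = 0\<close> for every \<open>i\<close> with \<open>\<alpha>\<^sub>i > 0\<close>, so the
  neighbourhood can be taken to be all of \<open>W\<close>.  Grade the ring by total degree in the
  variables \<open>x\<^sub>j\<close>, \<open>j \<in> \<Lambda>(\<eta>)\<close>.  Then \<open>(I(E\<^sup>0\<^sub>\<Lambda>(\<eta>)))\<^sup>m\<close> lies in degree \<open>\<ge> m\<close>, and a unit \<open>h\<close> of the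
  local ring at \<eta> has a nonzero part of degree 0.  Since lowest-degree parts multiply,
  \<open>h f\<close> has a monomial of degree at most that of any monomial of \<open>f\<close>; so the order of \<open>f\<close>
  at \<eta> is bounded by the degree of \<open>y\<^sup>\<gamma> x\<^sup>\<alpha>\<close>, which is \<open>< |\<alpha>| = \<theta>\<close> as soon as some \<open>x\<^sub>i\<close> with
  \<open>\<alpha>\<^sub>i > 0\<close> is missing from \<open>\<Lambda>(\<eta>)\<close>.\<close>

definition wdeg :: "nat set \<Rightarrow> (nat \<Rightarrow>\<^sub>0 int) \<Rightarrow> int" where
  "wdeg L e = (\<Sum>j\<in>L. Poly_Mapping.lookup e j)"

definition wdeg_ge :: "nat set \<Rightarrow> 'k::field lpoly \<Rightarrow> int \<Rightarrow> bool" where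
  "wdeg_ge L p m \<longleftrightarrow> (\<forall>e\<in>Poly_Mapping.keys p. m \<le> wdeg L e)"

definition wdeg_homog :: "nat set \<Rightarrow> 'k::field lpoly \<Rightarrow> int \<Rightarrow> bool" where
  "wdeg_homog L p m \<longleftrightarrow> (\<forall>e\<in>Poly_Mapping.keys p. wdeg L e = m)"

definition wdeg_part :: "nat set \<Rightarrow> 'k::field lpoly \<Rightarrow> int \<Rightarrow> 'k lpoly" where
  "wdeg_part L p d = Abs_poly_mapping (\<lambda>e. if wdeg L e = d then Poly_Mapping.lookup p e else 0)"

lemma wdeg_add: "wdeg L (a + b) = wdeg L a + wdeg L b"
  by (simp add: wdeg_def lookup_add sum.distrib)

lemma lookup_wdeg_part:
  "Poly_Mapping.lookup (wdeg_part L p d) e = (if wdeg L e = d then Poly_Mapping.lookup p e else 0)"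
proof -
  have "finite {e. (if wdeg L e = d then Poly_Mapping.lookup p e else 0) \<noteq> 0}"
    by (rule finite_subset[of _ "Poly_Mapping.keys p"]) (auto simp: in_keys_iff)
  then show ?thesis unfolding wdeg_part_def by simp
qed

lemma wdeg_part_add: "wdeg_part L (p + q) d = wdeg_part L p d + wdeg_part L q d"
  by (simp add: poly_mapping_eq_iff fun_eq_iff lookup_wdeg_part lookup_add)

lemma wdeg_part_eq_0: "wdeg_ge L p (d + 1) \<Longrightarrow> wdeg_part L p d = 0"
  by (force simp: poly_mapping_eq_iff fun_eq_iff lookup_wdeg_part wdeg_ge_def in_keys_iff)

lemma wdeg_part_homog: "wdeg_homog L p d \<Longrightarrow> wdeg_part L p d = p"
  by (force simp: poly_mapping_eq_iff fun_eq_iff lookup_wdeg_part wdeg_homog_def in_keys_iff)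

lemma wdeg_homog_part: "wdeg_homog L (wdeg_part L p d) d"
  unfolding wdeg_homog_def by (metis in_keys_iff lookup_wdeg_part)

lemma wdeg_homog_imp_ge: "wdeg_homog L p d \<Longrightarrow> wdeg_ge L p d"
  by (simp add: wdeg_homog_def wdeg_ge_def)

lemma wdeg_ge_mono: "wdeg_ge L p m \<Longrightarrow> k \<le> m \<Longrightarrow> wdeg_ge L p k"
  unfolding wdeg_ge_def by force

lemma wdeg_ge_add: "wdeg_ge L p m \<Longrightarrow> wdeg_ge L q m \<Longrightarrow> wdeg_ge L (p + q) m"
  unfolding wdeg_ge_def using keys_add[of p q] by blast

lemma wdeg_ge_sum: "(\<And>g. g \<in> F \<Longrightarrow> wdeg_ge L (f g) m) \<Longrightarrow> wdeg_ge L (sum f F) m"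
proof (induction F rule: infinite_finite_induct)
  case (insert x F)
  then show ?case by (simp add: wdeg_ge_add)
qed (simp_all add: wdeg_ge_def)

lemma wdeg_ge_mult: "wdeg_ge L p m \<Longrightarrow> wdeg_ge L q k \<Longrightarrow> wdeg_ge L (p * q) (m + k)"
  unfolding wdeg_ge_def using keys_mult[of p q] by (force simp: wdeg_add)

lemma wdeg_homog_mult: "wdeg_homog L p m \<Longrightarrow> wdeg_homog L q k \<Longrightarrow> wdeg_homog L (p * q) (m + k)"
  unfolding wdeg_homog_def using keys_mult[of p q] by (force simp: wdeg_add)

lemma wdeg_ge_diff_part: "wdeg_ge L p m \<Longrightarrow> wdeg_ge L (p - wdeg_part L p m) (m + 1)"
  by (force simp: wdeg_ge_def in_keys_iff lookup_minus lookup_wdeg_part split: if_splits)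

lemma wdeg_part_mult:
  assumes "wdeg_ge L p m" "wdeg_ge L q k"
  shows "wdeg_part L (p * q) (m + k) = wdeg_part L p m * wdeg_part L q k"
proof -
  define p0 q0 where "p0 = wdeg_part L p m" and "q0 = wdeg_part L q k"
  define p1 q1 where "p1 = p - p0" and "q1 = q - q0"
  have hi: "wdeg_ge L p1 (m + 1)" "wdeg_ge L q1 (k + 1)"
    using wdeg_ge_diff_part assms unfolding p0_def q0_def p1_def q1_def by blast+
  have lo: "wdeg_homog L p0 m" "wdeg_homog L q0 k"
    unfolding p0_def q0_def by (rule wdeg_homog_part)+
  have "p * q = p0 * q0 + (p0 * q1 + p1 * q0 + p1 * q1)"
    unfolding p1_def q1_def by (simp add: algebra_simps)
  moreover have rest: "wdeg_ge L (p0 * q1 + p1 * q0 + p1 * q1) (m + k + 1)"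
  proof -
    have "wdeg_ge L (p0 * q1) (m + k + 1)"
      using wdeg_ge_mult[OF wdeg_homog_imp_ge[OF lo(1)] hi(2)] by (simp add: add.assoc)
    moreover have "wdeg_ge L (p1 * q0) (m + k + 1)"
      using wdeg_ge_mult[OF hi(1) wdeg_homog_imp_ge[OF lo(2)]] by (simp add: algebra_simps)
    moreover have "wdeg_ge L (p1 * q1) (m + k + 1)"
      using wdeg_ge_mono[OF wdeg_ge_mult[OF hi]] by simp
    ultimately show ?thesis by (simp add: wdeg_ge_add)
  qed
  ultimately have "wdeg_part L (p * q) (m + k)
      = wdeg_part L (p0 * q0) (m + k) + wdeg_part L (p0 * q1 + p1 * q0 + p1 * q1) (m + k)"
    by (simp only: wdeg_part_add)
  also have "\<dots> = p0 * q0"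
    using wdeg_part_eq_0[OF rest] wdeg_part_homog[OF wdeg_homog_mult[OF lo]] by simp
  finally show ?thesis unfolding p0_def q0_def .
qed

lemma wdeg_lowest_part:
  assumes "e \<in> Poly_Mapping.keys p"
  shows "\<exists>k \<le> wdeg L e. wdeg_ge L p k \<and> wdeg_part L p k \<noteq> 0"
proof -
  define D where "D = wdeg L ` Poly_Mapping.keys p"
  have D: "finite D" "wdeg L e \<in> D"
    using assms unfolding D_def by simp_all
  then have "Min D \<in> D" "Min D \<le> wdeg L e"
    by (auto intro: Min_in Min_le)
  moreover have "wdeg_ge L p (Min D)"
    unfolding wdeg_ge_def D_def by simp
  moreover obtain e' where "e' \<in> Poly_Mapping.keys p" "wdeg L e' = Min D"
    using \<open>Min D \<in> D\<close> unfolding D_def by (metis imageE)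
  then have "Poly_Mapping.lookup (wdeg_part L p (Min D)) e' \<noteq> 0"
    by (simp add: lookup_wdeg_part in_keys_iff)
  then have "wdeg_part L p (Min D) \<noteq> 0" by auto
  ultimately show ?thesis by blast
qed

lemma Lam_subset: "Lam s a \<subseteq> {..<s}"
  by (auto simp: Lam_def)

lemma wdeg_ge_Rng: "L \<subseteq> {..<s} \<Longrightarrow> g \<in> Rng s n \<Longrightarrow> wdeg_ge L g 0"
  unfolding wdeg_ge_def wdeg_def Rng_def by (simp add: subset_eq sum_nonneg)

lemma wdeg_ge_ideal_gen:
  assumes "L \<subseteq> {..<s}" "\<And>g. g \<in> S \<Longrightarrow> wdeg_ge L g m" "p \<in> ideal_gen s n S"
  shows "wdeg_ge L p m"
proof -
  from assms(3) obtain F c where F: "p = (\<Sum>g\<in>F. c g * g)" "F \<subseteq> S" "\<forall>g\<in>F. c g \<in> Rng s n"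
    unfolding ideal_gen_def by blast
  have "wdeg_ge L (c g * g) m" if "g \<in> F" for g
    using wdeg_ge_mult[OF wdeg_ge_Rng[OF assms(1)] assms(2), of "c g" n g] F(2,3) that by auto
  then show ?thesis unfolding F(1) by (rule wdeg_ge_sum)
qed

lemma wdeg_ge_prod_list:
  "(\<And>p. p \<in> set l \<Longrightarrow> wdeg_ge L p 1) \<Longrightarrow> wdeg_ge L (prod_list l) (int (length l))"
proof (induction l)
  case Nil
  then show ?case by (simp add: wdeg_ge_def wdeg_def)
next
  case (Cons a l)
  then show ?case
    using wdeg_ge_mult[of L a 1 "prod_list l" "int (length l)"] by (simp add: add.commute)
qed

lemma wdeg_ge_stratum_ideal_pow:
  assumes "p \<in> ideal_pow s n (stratum_ideal s n a) m"
  shows "wdeg_ge (Lam s a) p (int m)"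
proof -
  have fin: "finite (Lam s a)"
    using Lam_subset finite_subset by blast
  have var: "wdeg_ge (Lam s a) (var j :: 'k::field lpoly) 1" if "j \<in> Lam s a" for j
    using fin that by (simp add: wdeg_ge_def wdeg_def var_def lookup_single when_def)
  have stratum: "wdeg_ge (Lam s a) q 1" if "q \<in> stratum_ideal s n a" for q
    using wdeg_ge_ideal_gen[OF Lam_subset _ that[unfolded stratum_ideal_def]] var by blast
  have "wdeg_ge (Lam s a) g (int m)"
    if "g \<in> {prod_list l |l. length l = m \<and> set l \<subseteq> stratum_ideal s n a}" for g
  proof -
    from that obtain l where l: "g = prod_list l" "length l = m" "set l \<subseteq> stratum_ideal s n a"
      by blast
    have "wdeg_ge (Lam s a) (prod_list l) (int (length l))"
      using l(3) stratum by (intro wdeg_ge_prod_list) blast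
    with l(1,2) show ?thesis by simp
  qed
  with assms show ?thesis
    unfolding ideal_pow_def by (rule wdeg_ge_ideal_gen[OF Lam_subset, rotated])
qed

text \<open>A monomial that does not vanish at \<open>a\<close> contains none of the \<open>x\<^sub>j\<close> with \<open>a\<^sub>j = 0\<close>.\<close>
lemma wdeg_part_0_unit:
  assumes "h \<in> Rng s n" "eval h a \<noteq> 0"
  shows "wdeg_part (Lam s a) h 0 \<noteq> 0"
proof -
  obtain e where e: "e \<in> Poly_Mapping.keys h"
    "Poly_Mapping.lookup h e * (\<Prod>i\<in>Poly_Mapping.keys e. a i powi Poly_Mapping.lookup e i) \<noteq> 0"
    using assms(2) unfolding eval_def by (meson sum.neutral)
  have "Poly_Mapping.lookup e j = 0" if j: "j \<in> Lam s a" for j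
  proof (rule ccontr)
    assume nz: "Poly_Mapping.lookup e j \<noteq> 0"
    have "j < s" "a j = 0" using j by (auto simp: Lam_def)
    with assms(1) e(1) nz have "Poly_Mapping.lookup e j > 0"
      by (force simp: Rng_def)
    with \<open>a j = 0\<close> have "a j powi Poly_Mapping.lookup e j = 0" by simp
    with nz have "(\<Prod>i\<in>Poly_Mapping.keys e. a i powi Poly_Mapping.lookup e i) = 0"
      by (meson finite_keys in_keys_iff prod_zero)
    with e(2) show False by simp
  qed
  then have "wdeg (Lam s a) e = 0"
    unfolding wdeg_def by simp
  with e(1) have "Poly_Mapping.lookup (wdeg_part (Lam s a) h 0) e \<noteq> 0"
    by (simp add: lookup_wdeg_part in_keys_iff)
  then show ?thesis by auto
qed

lemma loc_sub_le_wdeg: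
  assumes "loc_sub s n J a m" "f \<in> J" "e \<in> Poly_Mapping.keys f"
  shows "int m \<le> wdeg (Lam s a) e"
proof -
  let ?L = "Lam s a"
  obtain h where h: "h \<in> Rng s n" "eval h a \<noteq> 0"
    "h * f \<in> ideal_pow s n (stratum_ideal s n a) m"
    using assms(1,2) unfolding loc_sub_def by blast
  obtain k where k: "k \<le> wdeg ?L e" "wdeg_ge ?L f k" "wdeg_part ?L f k \<noteq> 0"
    using wdeg_lowest_part[OF assms(3)] by blast
  have "wdeg_part ?L (h * f) (0 + k) = wdeg_part ?L h 0 * wdeg_part ?L f k"
    by (rule wdeg_part_mult[OF wdeg_ge_Rng[OF Lam_subset h(1)] k(2)])
  also have "\<dots> \<noteq> 0"
    using wdeg_part_0_unit[OF h(1,2)] k(3) by simp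
  finally have nonzero: "wdeg_part ?L (h * f) k \<noteq> 0" by simp
  have "int m \<le> k"
  proof (rule ccontr)
    assume "\<not> int m \<le> k"
    then have "wdeg_ge ?L (h * f) (k + 1)"
      by (intro wdeg_ge_mono[OF wdeg_ge_stratum_ideal_pow[OF h(3)]]) simp
    then have "wdeg_part ?L (h * f) k = 0"
      by (rule wdeg_part_eq_0)
    with nonzero show False ..
  qed
  with k(1) show ?thesis by simp
qed

lemma loc_sub_of_Eord_ge:
  assumes "enat \<theta> \<le> Eord s n J a" "\<theta> > 0"
  shows "\<exists>m \<ge> \<theta>. loc_sub s n J a m"
proof -
  have "enat (\<theta> - 1) < enat \<theta>"
    using assms(2) by simp
  also have "\<dots> \<le> Sup {enat m | m. loc_sub s n J a m}"
    using assms(1) unfolding Eord_def .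
  finally have "enat (\<theta> - 1) < Sup {enat m | m. loc_sub s n J a m}" .
  then obtain x where "x \<in> {enat m | m. loc_sub s n J a m}" "enat (\<theta> - 1) < x"
    unfolding less_Sup_iff by blast
  then obtain m where "\<theta> - 1 < m" "loc_sub s n J a m"
    by auto
  moreover from \<open>\<theta> - 1 < m\<close> have "\<theta> \<le> m" using assms(2) by linarith
  ultimately show ?thesis by blast
qed

lemma lookup_expo: "Poly_Mapping.lookup (expo s n \<alpha> \<gamma>) j =
   (if j < s then int (\<alpha> j) else if j < n then \<gamma> (j - s) else 0)"
proof -
  have "finite {j. (if j < s then int (\<alpha> j) else if j < n then \<gamma> (j - s) else 0) \<noteq> 0}"
    by (rule finite_subset[of _ "{..<max s n}"]) auto
  then show ?thesis unfolding expo_def by simp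
qed

lemma wdeg_expo: "L \<subseteq> {..<s} \<Longrightarrow> wdeg L (expo s n \<alpha> \<gamma>) = (\<Sum>j\<in>L. int (\<alpha> j))"
  unfolding wdeg_def by (rule sum.cong) (use lookup_expo in force)+

lemma absn_pos_imp_ex: "0 < absn s \<alpha> \<Longrightarrow> \<exists>i<s. 0 < \<alpha> i"
  unfolding absn_def by (metis gr0I lessThan_iff sum.neutral)

lemma expo_in_keys_binom:
  assumes "coprime_exps s \<alpha> \<beta>" "0 < absn s \<alpha>"
  shows "expo s n \<alpha> \<gamma> \<in> Poly_Mapping.keys (binom s n \<alpha> \<beta> \<gamma> b :: 'k::field lpoly)"
proof -
  obtain i where i: "i < s" "\<alpha> i > 0"
    using absn_pos_imp_ex[OF assms(2)] by blast
  with assms(1) have "\<beta> i = 0" by (auto simp: coprime_exps_def)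
  with i have "expo s n \<alpha> \<gamma> \<noteq> expo s n \<beta> zeroy"
    by (metis lookup_expo of_nat_eq_iff less_irrefl)
  then show ?thesis
    by (simp add: binom_def mon_def in_keys_iff lookup_minus lookup_single)
qed

lemma coordinate_eq_0_on_ESing:
  assumes "\<theta> = absn s \<alpha>" "\<theta> > 0" "binom s n \<alpha> \<beta> \<gamma> b \<in> J" "coprime_exps s \<alpha> \<beta>"
    and "\<eta> \<in> ESing s n J (enat \<theta>)" "i < s" "\<alpha> i > 0"
  shows "\<eta> i = 0"
proof (rule ccontr)
  assume "\<eta> i \<noteq> 0"
  then have i_notin: "i \<notin> Lam s \<eta>" by (simp add: Lam_def)
  obtain m where m: "m \<ge> \<theta>" "loc_sub s n J \<eta> m"
    using loc_sub_of_Eord_ge assms(2,5) by (fastforce simp: ESing_def)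
  have "int m \<le> wdeg (Lam s \<eta>) (expo s n \<alpha> \<gamma>)"
    using loc_sub_le_wdeg[OF m(2) assms(3) expo_in_keys_binom] assms(1,2,4) by simp
  also have "\<dots> = (\<Sum>j\<in>Lam s \<eta>. int (\<alpha> j))"
    by (rule wdeg_expo[OF Lam_subset])
  also have "\<dots> \<le> (\<Sum>j\<in>{..<s} - {i}. int (\<alpha> j))"
    by (rule sum_mono2) (use Lam_subset i_notin in auto)
  also have "\<dots> < (\<Sum>j<s. int (\<alpha> j))"
    using assms(6,7) by (simp add: sum.remove[of "{..<s}" i])
  also have "\<dots> = int \<theta>"
    using assms(1) by (simp add: absn_def)
  finally show False using m(1) by simp
qed

theorem mainTheorem8:
  fixes s n :: nat and J :: "'k::field lpoly set" and \<xi> :: "nat \<Rightarrow> 'k"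
    and \<alpha> \<beta> :: "nat \<Rightarrow> nat" and \<gamma> :: "nat \<Rightarrow> int" and b :: 'k and \<theta> :: nat
  assumes "alg_closed TYPE('k)"
    and "s \<le> n"
    and "binomial_ideal s n J"
    and "\<xi> \<in> Pts s n"
    and "Eord s n J \<xi> = enat \<theta>" and "\<theta> > 0"
    and "\<forall>\<eta>\<in>Pts s n. Eord s n J \<eta> \<le> Eord s n J \<xi>"
    and "binom s n \<alpha> \<beta> \<gamma> b \<in> J"
    and "coprime_exps s \<alpha> \<beta>" and "0 < absn s \<alpha>" and "absn s \<alpha> \<le> absn s \<beta>"
    and "Eord s n {binom s n \<alpha> \<beta> \<gamma> b} \<xi> = enat \<theta>"
    and "\<theta> = absn s \<alpha>"
    and "\<forall>i<s. \<alpha> i > 0 \<longrightarrow> \<xi> i = 0"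
    and "eval (mon s n zerox \<gamma> 1) \<xi> \<noteq> 0"
  shows "\<exists>g\<in>Rng s n. eval g \<xi> \<noteq> 0 \<and>
           (\<exists>i<s. \<alpha> i > 0 \<and>
              (\<forall>\<eta>\<in>ESing s n J (enat \<theta>). eval g \<eta> \<noteq> 0 \<longrightarrow> \<eta> i = 0))"
proof -
  obtain i where i: "i < s" "\<alpha> i > 0"
    using absn_pos_imp_ex[OF assms(10)] by blast
  have "(1 :: 'k lpoly) \<in> Rng s n" "eval (1 :: 'k lpoly) \<xi> \<noteq> 0"
    by (simp_all add: Rng_def eval_def)
  moreover have "\<forall>\<eta>\<in>ESing s n J (enat \<theta>). \<eta> i = 0"
    using coordinate_eq_0_on_ESing[OF assms(13,6,8,9) _ i] by blast
  ultimately show ?thesis using i by blast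
qed

end
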